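(* In the setting of the context, assume $\Pi^\rho_\nu\ne\emptyset$ for all $\nu\ge0$. Then the following are equivalent: (a) $\rho_1>0$; (b) $\mathcal{E}_\rho\ne\emptyset$. Moreover, if $\rho_1>0$, then $\mathcal{E}_\rho=\{(k\rho_1,k):k\ge0\}$.
   Context: Let $(\Omega,\mathcal{F},\mathbb{P})$ be a probability space and a market: riskless asset $S^0_0=1$, $S^0_1=1+r$, $r>-1$; risky assets $S^1,\dots,S^d$ with constants $S^i_0>0$ and real-valued $\mathcal{F}$-measurable $S^i_1$; returns $R^i:=(S^i_1-S^i_0)/S^i_0$. Standing assumptions: nonredundancy (if $\theta\in\mathbb{R}^{1+d}$ with $\sum_{i=0}^d\theta^iS^i_t=0$ a.s. for $t\in\{0,1\}$ then $\theta=0$), $R^i\in L^1$, $\mathbb{E}[R^i]\ne r$ for some $i$. Excess return of $\pi\in\mathbb{R}^d$: $X_\pi:=\pi\cdot(R-r\mathbf{1})$; $\Pi_\nu:=\{\pi:\mathbb{E}[X_\pi]=\nu\}$. $L$ is a Riesz space with $L^\infty\subset L\subset L^1$ containing all $X_\pi$; $\rho:L\to(-\infty,\infty]$ is monotone, cash-invariant and positively homogeneous. $\rho_\nu:=\inf\{\rho(X_\pi):\pi\in\Pi_\nu\}$; $\Pi^\rho_\nu$ is the set of $\pi\in\Pi_\nu$ with $\rho(X_\pi)<\infty$ and $\rho(X_\pi)\le\rho(X_{\pi'})$ for all $\pi'\in\Pi_\nu$. $\pi$ is strictly $\rho$-preferred over $\pi'$ if $\mathbb{E}[X_\pi]\ge\mathbb{E}[X_{\pi'}]$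 and $\rho(X_\pi)\le\rho(X_{\pi'})$ with one inequality strict; $\pi$ is $\rho$-efficient if $\mathbb{E}[X_\pi]\ge0$ and no portfolio is strictly $\rho$-preferred over it. The $\rho$-efficient frontier is $\mathcal{E}_\rho:=\{(\rho(X_\pi),\mathbb{E}[X_\pi]):\pi \text{ is } \rho\text{-efficient}\}$. *)

theory Defs
  imports "HOL-Probability.Probability"
begin

text \<open>Market: risky assets indexed by the finite type 'n (d = CARD('n)).
  S0 :: real^'n are the initial prices S^i_0, S1 \<omega> $ i the terminal prices S^i_1(\<omega>),
  r the riskless rate.\<close>

definition ret :: "real^'n \<Rightarrow> ('a \<Rightarrow> real^'n) \<Rightarrow> 'n \<Rightarrow> 'a \<Rightarrow> real" where
  "ret S0 S1 i = (\<lambda>\<omega>. (S1 \<omega> $ i - S0 $ i) / S0 $ i)"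

definition excess :: "real^'n \<Rightarrow> ('a \<Rightarrow> real^'n) \<Rightarrow> real \<Rightarrow> real^'n \<Rightarrow> 'a \<Rightarrow> real" where
  "excess S0 S1 r \<pi> = (\<lambda>\<omega>. \<Sum>i\<in>UNIV. \<pi> $ i * (ret S0 S1 i \<omega> - r))"

definition nonredundant :: "'a measure \<Rightarrow> real^'n \<Rightarrow> ('a \<Rightarrow> real^'n) \<Rightarrow> real \<Rightarrow> bool" where
  "nonredundant M S0 S1 r \<longleftrightarrow>
     (\<forall>(\<theta>0::real) (\<theta>::real^'n).
        (\<theta>0 * 1 + (\<Sum>i\<in>UNIV. \<theta> $ i * S0 $ i) = 0) \<and>
        (AE \<omega> in M. \<theta>0 * (1 + r) + (\<Sum>i\<in>UNIV. \<theta> $ i * S1 \<omega> $ i) = 0)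
        \<longrightarrow> \<theta>0 = 0 \<and> \<theta> = 0)"

definition riesz_space_between :: "'a measure \<Rightarrow> ('a \<Rightarrow> real) set \<Rightarrow> bool" where
  "riesz_space_between M L \<longleftrightarrow>
     (\<forall>X\<in>L. \<forall>Y\<in>L. (\<lambda>\<omega>. X \<omega> + Y \<omega>) \<in> L) \<and>
     (\<forall>X\<in>L. \<forall>c::real. (\<lambda>\<omega>. c * X \<omega>) \<in> L) \<and>
     (\<forall>X\<in>L. \<forall>Y\<in>L. (\<lambda>\<omega>. max (X \<omega>) (Y \<omega>)) \<in> L) \<and>
     (\<forall>X. X \<in> borel_measurable M \<and> (\<exists>B. AE \<omega> in M. \<bar>X \<omega>\<bar> \<le> B) \<longrightarrow> X \<in> L) \<and>
     (\<forall>X\<in>L. integrable M X)"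

definition risk_measure :: "'a measure \<Rightarrow> ('a \<Rightarrow> real) set \<Rightarrow> (('a \<Rightarrow> real) \<Rightarrow> ereal) \<Rightarrow> bool" where
  "risk_measure M L \<rho> \<longleftrightarrow>
     (\<forall>X\<in>L. \<rho> X \<noteq> -\<infinity>) \<and>
     (\<forall>X\<in>L. \<forall>Y\<in>L. (AE \<omega> in M. Y \<omega> \<le> X \<omega>) \<longrightarrow> \<rho> X \<le> \<rho> Y) \<and>
     (\<forall>X\<in>L. \<forall>c::real. \<rho> (\<lambda>\<omega>. X \<omega> + c) = \<rho> X - ereal c) \<and>
     (\<forall>X\<in>L. \<forall>l::real. l > 0 \<longrightarrow> \<rho> (\<lambda>\<omega>. l * X \<omega>) = ereal l * \<rho> X)"

definition Pi_nu :: "'a measure \<Rightarrow> real^'n \<Rightarrow> ('a \<Rightarrow> real^'n) \<Rightarrow> real \<Rightarrow> real \<Rightarrow> (real^'n) set" where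
  "Pi_nu M S0 S1 r \<nu> = {\<pi>. (\<integral>\<omega>. excess S0 S1 r \<pi> \<omega> \<partial>M) = \<nu>}"

definition rho_nu :: "'a measure \<Rightarrow> real^'n \<Rightarrow> ('a \<Rightarrow> real^'n) \<Rightarrow> real \<Rightarrow> (('a \<Rightarrow> real) \<Rightarrow> ereal) \<Rightarrow> real \<Rightarrow> ereal" where
  "rho_nu M S0 S1 r \<rho> \<nu> = (INF \<pi>\<in>Pi_nu M S0 S1 r \<nu>. \<rho> (excess S0 S1 r \<pi>))"

definition Pi_rho_nu :: "'a measure \<Rightarrow> real^'n \<Rightarrow> ('a \<Rightarrow> real^'n) \<Rightarrow> real \<Rightarrow> (('a \<Rightarrow> real) \<Rightarrow> ereal) \<Rightarrow> real \<Rightarrow> (real^'n) set" where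
  "Pi_rho_nu M S0 S1 r \<rho> \<nu> =
     {\<pi> \<in> Pi_nu M S0 S1 r \<nu>. \<rho> (excess S0 S1 r \<pi>) < \<infinity> \<and>
        (\<forall>\<pi>'\<in>Pi_nu M S0 S1 r \<nu>. \<rho> (excess S0 S1 r \<pi>) \<le> \<rho> (excess S0 S1 r \<pi>'))}"

definition strictly_preferred :: "'a measure \<Rightarrow> real^'n \<Rightarrow> ('a \<Rightarrow> real^'n) \<Rightarrow> real \<Rightarrow> (('a \<Rightarrow> real) \<Rightarrow> ereal) \<Rightarrow> real^'n \<Rightarrow> real^'n \<Rightarrow> bool" where
  "strictly_preferred M S0 S1 r \<rho> \<pi> \<pi>' \<longleftrightarrow>
     (let E = (\<lambda>p. \<integral>\<omega>. excess S0 S1 r p \<omega> \<partial>M); R = (\<lambda>p. \<rho> (excess S0 S1 r p)) in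
      E \<pi> \<ge> E \<pi>' \<and> R \<pi> \<le> R \<pi>' \<and> (E \<pi> > E \<pi>' \<or> R \<pi> < R \<pi>'))"

definition efficient :: "'a measure \<Rightarrow> real^'n \<Rightarrow> ('a \<Rightarrow> real^'n) \<Rightarrow> real \<Rightarrow> (('a \<Rightarrow> real) \<Rightarrow> ereal) \<Rightarrow> real^'n \<Rightarrow> bool" where
  "efficient M S0 S1 r \<rho> \<pi> \<longleftrightarrow>
     (\<integral>\<omega>. excess S0 S1 r \<pi> \<omega> \<partial>M) \<ge> 0 \<and>
     \<not> (\<exists>\<pi>'. strictly_preferred M S0 S1 r \<rho> \<pi>' \<pi>)"

definition efficient_frontier :: "'a measure \<Rightarrow> real^'n \<Rightarrow> ('a \<Rightarrow> real^'n) \<Rightarrow> real \<Rightarrow> (('a \<Rightarrow> real) \<Rightarrow> ereal) \<Rightarrow> (ereal \<times> real) set" where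
  "efficient_frontier M S0 S1 r \<rho> =
     {(\<rho> (excess S0 S1 r \<pi>), \<integral>\<omega>. excess S0 S1 r \<pi> \<omega> \<partial>M) | \<pi>. efficient M S0 S1 r \<rho> \<pi>}"

end

theory Submission
  imports Defs
begin

text \<open>Only two features of the market enter: the mean excess return is linear in the portfolio
  and the risk of the excess return is positively homogeneous. Hence the minimal risk at level
  \<nu> \<ge> 0 is \<nu> times the minimal risk r1 at level 1, attained by \<nu> times a level-1 minimiser
  (the minimal risk at level 0 is 0, being invariant under scaling). A portfolio with mean
  \<nu> \<ge> 0 is therefore efficient iff its risk is exactly \<nu> r1 and raising the mean does not lower
  this bound, i.e. iff r1 > 0. If r1 \<le> 0, every portfolio is dominated by a scaled level-1
  minimiser with larger mean.\<close>

locale homogeneous_mean_risk =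
  fixes E :: "'v::real_vector \<Rightarrow> real" and R :: "'v \<Rightarrow> ereal"
  assumes E_scaleR: "E (c *\<^sub>R p) = c * E p"
    and R_scaleR: "c > 0 \<Longrightarrow> R (c *\<^sub>R p) = ereal c * R p"
    and R_not_MInfty: "R p \<noteq> -\<infinity>"
    and minimiser_exists:
      "\<nu> \<ge> 0 \<Longrightarrow> \<exists>p. E p = \<nu> \<and> R p < \<infinity> \<and> (\<forall>q. E q = \<nu> \<longrightarrow> R p \<le> R q)"
begin

definition min_risk :: "real \<Rightarrow> ereal" where
  "min_risk \<nu> = (INF q\<in>{q. E q = \<nu>}. R q)"

definition dominates :: "'v \<Rightarrow> 'v \<Rightarrow> bool" where
  "dominates q p \<longleftrightarrow> E q \<ge> E p \<and> R q \<le> R p \<and> (E q > E p \<or> R q < R p)"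

definition is_efficient :: "'v \<Rightarrow> bool" where
  "is_efficient p \<longleftrightarrow> E p \<ge> 0 \<and> \<not> (\<exists>q. dominates q p)"

lemma real_minimiser:
  assumes "\<nu> \<ge> 0"
  obtains p m where "E p = \<nu>" "R p = ereal m" "min_risk \<nu> = ereal m"
    "\<And>q. E q = \<nu> \<Longrightarrow> ereal m \<le> R q"
proof -
  obtain p where p: "E p = \<nu>" "R p < \<infinity>" "\<forall>q. E q = \<nu> \<longrightarrow> R p \<le> R q"
    using minimiser_exists[OF assms] by blast
  then obtain m where m: "R p = ereal m"
    using R_not_MInfty[of p] by (cases "R p") auto
  have "min_risk \<nu> = R p"
    unfolding min_risk_def using p by (intro antisym INF_lower2[of p] INF_greatest) auto
  with p m show thesis by (intro that[of p m]) auto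
qed

lemma zero_level_minimiser:
  obtains p0 where "E p0 = 0" "R p0 = 0" "\<And>q. E q = 0 \<Longrightarrow> 0 \<le> R q"
proof -
  obtain p0 m where p0: "E p0 = 0" "R p0 = ereal m" "\<And>q. E q = 0 \<Longrightarrow> ereal m \<le> R q"
    using real_minimiser[of 0] by (metis order_refl)
  have "E (2 *\<^sub>R p0) = 0" "E ((1/2) *\<^sub>R p0) = 0"
    using p0(1) by (simp_all add: E_scaleR)
  then have "ereal m \<le> ereal 2 * ereal m" "ereal m \<le> ereal (1/2) * ereal m"
    using p0 R_scaleR[of 2 p0] R_scaleR[of "1/2" p0] by (metis zero_less_numeral
        zero_less_divide_1_iff)+
  then have "m = 0" by simp
  with p0 show thesis by (intro that[of p0]) (auto simp: zero_ereal_def)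
qed

lemma R_lower_bound:
  assumes rho1: "min_risk 1 = ereal a" and nonneg: "E q \<ge> 0"
  shows "ereal (E q * a) \<le> R q"
proof (cases "E q = 0")
  case True
  then show ?thesis using zero_level_minimiser by (metis mult_zero_left zero_ereal_def)
next
  case False
  define \<nu> where "\<nu> = E q"
  have "\<nu> > 0" using nonneg False \<nu>_def by auto
  have "E ((1/\<nu>) *\<^sub>R q) = 1" using \<open>\<nu> > 0\<close> \<nu>_def E_scaleR by simp
  then have "ereal a \<le> R ((1/\<nu>) *\<^sub>R q)"
    unfolding rho1[symmetric] min_risk_def by (rule INF_lower[OF CollectI])
  then have "ereal \<nu> * ereal a \<le> ereal \<nu> * R ((1/\<nu>) *\<^sub>R q)"
    using \<open>\<nu> > 0\<close> by (intro ereal_mult_left_mono) auto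
  also have "\<dots> = R q" using R_scaleR[OF \<open>\<nu> > 0\<close>, of "(1/\<nu>) *\<^sub>R q"] \<open>\<nu> > 0\<close> by simp
  finally show ?thesis using \<nu>_def by simp
qed

lemma lower_bound_attained:
  assumes "min_risk 1 = ereal a" and "\<nu> \<ge> 0"
  obtains p where "E p = \<nu>" "R p = ereal (\<nu> * a)"
proof (cases "\<nu> = 0")
  case True
  then show thesis using zero_level_minimiser that by (metis mult_zero_left zero_ereal_def)
next
  case False
  then have "\<nu> > 0" using assms(2) by simp
  obtain p1 m where "E p1 = 1" "R p1 = ereal m" "min_risk 1 = ereal m"
    using real_minimiser[of 1] by (metis zero_le_one)
  with assms(1) R_scaleR[OF \<open>\<nu> > 0\<close>, of p1] show thesis
    by (intro that[of "\<nu> *\<^sub>R p1"]) (auto simp: E_scaleR)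
qed

lemma is_efficient_iff:
  assumes rho1: "min_risk 1 = ereal a" and "a > 0"
  shows "is_efficient p \<longleftrightarrow> E p \<ge> 0 \<and> R p = ereal (E p * a)"
proof
  assume eff: "is_efficient p"
  then have "E p \<ge> 0" by (simp add: is_efficient_def)
  then obtain w where w: "E w = E p" "R w = ereal (E p * a)"
    using lower_bound_attained[OF rho1] by blast
  have "R w \<le> R p" using R_lower_bound[OF rho1 \<open>E p \<ge> 0\<close>] w by simp
  moreover have "\<not> dominates w p" using eff by (auto simp: is_efficient_def)
  ultimately show "E p \<ge> 0 \<and> R p = ereal (E p * a)"
    using \<open>E p \<ge> 0\<close> w by (auto simp: dominates_def)
next
  assume p: "E p \<ge> 0 \<and> R p = ereal (E p * a)"
  have "\<not> dominates q p" for q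
  proof
    assume dom: "dominates q p"
    then have "E p \<le> E q" "R q \<le> R p" by (simp_all add: dominates_def)
    moreover have "ereal (E q * a) \<le> R q"
      using R_lower_bound[OF rho1] p \<open>E p \<le> E q\<close> by simp
    ultimately have "E q * a \<le> E p * a" using p by (metis ereal_less_eq(3) order_trans)
    with \<open>a > 0\<close> \<open>E p \<le> E q\<close> have "E q = E p" by simp
    with \<open>R q \<le> R p\<close> \<open>ereal (E q * a) \<le> R q\<close> p have "R q = R p" by simp
    with \<open>E q = E p\<close> dom show False by (simp add: dominates_def)
  qed
  with p show "is_efficient p" by (simp add: is_efficient_def)
qed

lemma not_efficient:
  assumes rho1: "min_risk 1 = ereal a" and "a \<le> 0"
  shows "\<not> is_efficient p"
proof
  assume "is_efficient p"
  then have "E p \<ge> 0" by (simp add: is_efficient_def)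
  obtain q where q: "E q = E p + 1" "R q = ereal ((E p + 1) * a)"
    using lower_bound_attained[OF rho1, of "E p + 1"] \<open>E p \<ge> 0\<close> by auto
  have "(E p + 1) * a \<le> E p * a" using \<open>a \<le> 0\<close> by (simp add: algebra_simps)
  then have "R q \<le> R p"
    using q(2) R_lower_bound[OF rho1 \<open>E p \<ge> 0\<close>] by (metis ereal_less_eq(3) order_trans)
  with q(1) have "dominates q p" by (simp add: dominates_def)
  with \<open>is_efficient p\<close> show False by (simp add: is_efficient_def)
qed

theorem efficient_frontier_characterisation:
  defines "F \<equiv> {(R p, E p) | p. is_efficient p}"
  shows "(min_risk 1 > 0 \<longleftrightarrow> F \<noteq> {}) \<and>
         (min_risk 1 > 0 \<longrightarrow> F = {(ereal k * min_risk 1, k) | k. k \<ge> 0})"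
proof -
  obtain a where rho1: "min_risk 1 = ereal a"
    using real_minimiser[of 1] by (metis zero_le_one)
  show ?thesis
  proof (cases "a > 0")
    case True
    have "F = {(ereal k * min_risk 1, k) | k. k \<ge> 0}"
    proof (intro set_eqI iffI)
      fix x assume "x \<in> F"
      then show "x \<in> {(ereal k * min_risk 1, k) | k. k \<ge> 0}"
        using is_efficient_iff[OF rho1 True] rho1 by (auto simp: F_def)
    next
      fix x assume "x \<in> {(ereal k * min_risk 1, k) | k. k \<ge> 0}"
      then obtain k where k: "x = (ereal k * ereal a, k)" "k \<ge> 0" using rho1 by auto
      then obtain p where "E p = k" "R p = ereal (k * a)"
        using lower_bound_attained[OF rho1] by blast
      with k is_efficient_iff[OF rho1 True, of p] have "is_efficient p" "x = (R p, E p)" by simp_all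
      then show "x \<in> F" unfolding F_def by blast
    qed
    moreover have "(ereal 0 * min_risk 1, 0) \<in> {(ereal k * min_risk 1, k) | k. k \<ge> 0}"
      by auto
    ultimately show ?thesis using True rho1 by auto
  next
    case False
    then show ?thesis using not_efficient[OF rho1] rho1 by (auto simp: F_def)
  qed
qed

end

lemma excess_scaleR: "excess S0 S1 r (c *\<^sub>R \<pi>) = (\<lambda>\<omega>. c * excess S0 S1 r \<pi> \<omega>)"
  unfolding excess_def by (simp add: sum_distrib_left algebra_simps)

theorem proposition3p15:
  fixes M :: "'a measure" and S0 :: "real^'n" and S1 :: "'a \<Rightarrow> real^'n" and r :: real
    and L :: "('a \<Rightarrow> real) set" and \<rho> :: "('a \<Rightarrow> real) \<Rightarrow> ereal"
  assumes "prob_space M"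
    and "r > -1"
    and "\<forall>i. S0 $ i > 0"
    and "\<forall>i. (\<lambda>\<omega>. S1 \<omega> $ i) \<in> borel_measurable M"
    and "nonredundant M S0 S1 r"
    and "\<forall>i. integrable M (ret S0 S1 i)"
    and "\<exists>i. (\<integral>\<omega>. ret S0 S1 i \<omega> \<partial>M) \<noteq> r"
    and "riesz_space_between M L"
    and "\<forall>\<pi>. excess S0 S1 r \<pi> \<in> L"
    and "risk_measure M L \<rho>"
    and "\<forall>\<nu>\<ge>0. Pi_rho_nu M S0 S1 r \<rho> \<nu> \<noteq> {}"
  shows "(rho_nu M S0 S1 r \<rho> 1 > 0 \<longleftrightarrow> efficient_frontier M S0 S1 r \<rho> \<noteq> {}) \<and>
         (rho_nu M S0 S1 r \<rho> 1 > 0 \<longrightarrow>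
            efficient_frontier M S0 S1 r \<rho> = {(ereal k * rho_nu M S0 S1 r \<rho> 1, k) | k. k \<ge> 0})"
proof -
  define E where "E \<pi> = (\<integral>\<omega>. excess S0 S1 r \<pi> \<omega> \<partial>M)" for \<pi>
  define R where "R \<pi> = \<rho> (excess S0 S1 r \<pi>)" for \<pi>
  interpret homogeneous_mean_risk E R
  proof
    show "E (c *\<^sub>R \<pi>) = c * E \<pi>" for c \<pi> by (simp add: E_def excess_scaleR)
    show "R (c *\<^sub>R \<pi>) = ereal c * R \<pi>" if "c > 0" for c \<pi>
      using assms(9,10) that by (simp add: R_def excess_scaleR risk_measure_def)
    show "R \<pi> \<noteq> -\<infinity>" for \<pi> using assms(9,10) by (simp add: R_def risk_measure_def)
    show "\<exists>\<pi>. E \<pi> = \<nu> \<and> R \<pi> < \<infinity> \<and> (\<forall>\<pi>'. E \<pi>' = \<nu> \<longrightarrow> R \<pi> \<le> R \<pi>')" if "\<nu> \<ge> 0" for \<nu>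
      using assms(11) that by (auto simp: Pi_rho_nu_def Pi_nu_def E_def R_def)
  qed
  have "rho_nu M S0 S1 r \<rho> 1 = min_risk 1"
    by (simp add: rho_nu_def Pi_nu_def min_risk_def E_def R_def)
  moreover have "efficient_frontier M S0 S1 r \<rho> = {(R \<pi>, E \<pi>) | \<pi>. is_efficient \<pi>}"
    by (simp add: efficient_frontier_def efficient_def strictly_preferred_def is_efficient_def
        dominates_def E_def R_def)
  ultimately show ?thesis using efficient_frontier_characterisation by simp
qed

end
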